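(* Let $f\in C^{1,1}_L(\mathbb{R}^n)$. For all $(u_1,u_2)\in\mathbb{R}^n\times\mathbb{R}^n$ and every matrix $H\in\mathbb{R}^{n\times n}$, $$\psi(u_1,u_2,H):=f(u_1)-f(u_2)-\tfrac{1}{2L}\langle (LI-H)(u_1-u_2),\nabla f(u_1)\rangle-\tfrac{1}{2L}\langle (LI+H)(u_1-u_2),\nabla f(u_2)\rangle-\tfrac{1}{4L}\|H(u_1-u_2)\|^2-\tfrac{L}{4}\|u_1-u_2\|^2\le 0 .$$
   Context: Let $L>0$. $C^{1,1}_L(\mathbb{R}^n)$ denotes the set of differentiable functions $f:\mathbb{R}^n\to\mathbb{R}$ with $\|\nabla f(u_1)-\nabla f(u_2)\|\le L\|u_1-u_2\|$ for all $u_1,u_2\in\mathbb{R}^n$ (Euclidean norm). *)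

theory Defs
  imports "HOL-Analysis.Analysis"
begin

definition C11 :: "real \<Rightarrow> (real^'n \<Rightarrow> real) \<Rightarrow> (real^'n \<Rightarrow> real^'n) \<Rightarrow> bool" where
  "C11 L f g \<longleftrightarrow> (\<forall>x. (f has_derivative (\<lambda>h. g x \<bullet> h)) (at x))
     \<and> (\<forall>u1 u2. norm (g u1 - g u2) \<le> L * norm (u1 - u2))"

end

theory Submission
  imports Defs
begin

(* A gradient that is L-Lipschitz gives the two-sided quadratic bound
   |f z - f x - <g x, z - x>| <= L/2 |z - x|^2.  Applying its two halves along
   u2 -> z -> u1 with the intermediate point z = (u1 + u2)/2 + (g u1 - g u2)/(2L)
   yields  f u1 - f u2 <= <u1 - u2, g u1 + g u2>/2 - |g u1 - g u2|^2/(4L) + L/4 |u1 - u2|^2.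
   With d = u1 - u2 and e = g u1 - g u2, the matrix H then only contributes
   <Hd, e>/(2L) - |Hd|^2/(4L), so psi <= -|Hd - e|^2/(4L) <= 0. *)

lemma has_real_derivative_along_line:
  fixes f :: "'a::real_inner \<Rightarrow> real"
  assumes "(f has_derivative (\<lambda>h. g (x + t *\<^sub>R v) \<bullet> h)) (at (x + t *\<^sub>R v))"
  shows "((\<lambda>t. f (x + t *\<^sub>R v)) has_real_derivative (g (x + t *\<^sub>R v) \<bullet> v)) (at t)"
proof -
  have "((\<lambda>t. x + t *\<^sub>R v) has_derivative (\<lambda>s. s *\<^sub>R v)) (at t)"
    by (auto intro!: derivative_eq_intros)
  from has_derivative_compose[OF this assms]
  have "((\<lambda>t. f (x + t *\<^sub>R v)) has_derivative (\<lambda>s. g (x + t *\<^sub>R v) \<bullet> (s *\<^sub>R v))) (at t)"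
    by (simp add: o_def)
  then show ?thesis
    by (simp add: has_field_derivative_def mult_commute_abs)
qed

lemma lipschitz_gradient_lower_bound:
  fixes f :: "'a::real_inner \<Rightarrow> real"
  assumes deriv: "\<And>x. (f has_derivative (\<lambda>h. g x \<bullet> h)) (at x)"
    and lipschitz: "\<And>x y. norm (g x - g y) \<le> L * norm (x - y)"
  shows "f x + g x \<bullet> (z - x) - L / 2 * (norm (z - x))\<^sup>2 \<le> f z"
proof -
  define v where "v = z - x"
  define p where "p t = f (x + t *\<^sub>R v) - t * (g x \<bullet> v) + L / 2 * t\<^sup>2 * (norm v)\<^sup>2" for t
  define p' where "p' t = (g (x + t *\<^sub>R v) - g x) \<bullet> v + L * t * (norm v)\<^sup>2" for t
  have "(p has_real_derivative p' t) (at t)" for t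
    unfolding p_def p'_def
    by (auto intro!: derivative_eq_intros has_real_derivative_along_line deriv
             simp: power2_eq_square inner_diff_left)
  then obtain \<xi> where \<xi>: "0 < \<xi>" "p 1 - p 0 = p' \<xi>"
    using MVT2[of 0 1 p p'] by auto
  have "norm (g (x + \<xi> *\<^sub>R v) - g x) * norm v \<le> L * \<xi> * norm v * norm v"
    using lipschitz[of "x + \<xi> *\<^sub>R v" x] \<xi>(1) by (simp add: mult_right_mono)
  moreover have "- (norm (g (x + \<xi> *\<^sub>R v) - g x) * norm v) \<le> (g (x + \<xi> *\<^sub>R v) - g x) \<bullet> v"
    using Cauchy_Schwarz_ineq2[of "g (x + \<xi> *\<^sub>R v) - g x" v] by linarith
  ultimately have "0 \<le> p' \<xi>"
    unfolding p'_def by (simp add: power2_eq_square)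
  then show ?thesis
    using \<xi>(2) unfolding p_def v_def by simp
qed

lemma lipschitz_gradient_upper_bound:
  fixes f :: "'a::real_inner \<Rightarrow> real"
  assumes "\<And>x. (f has_derivative (\<lambda>h. g x \<bullet> h)) (at x)"
    and "\<And>x y. norm (g x - g y) \<le> L * norm (x - y)"
  shows "f z \<le> f x + g x \<bullet> (z - x) + L / 2 * (norm (z - x))\<^sup>2"
proof -
  have "(- f x) + (- g x) \<bullet> (z - x) - L / 2 * (norm (z - x))\<^sup>2 \<le> - f z"
    by (rule lipschitz_gradient_lower_bound[of "\<lambda>x. - f x" "\<lambda>x. - g x"])
       (auto intro!: derivative_eq_intros assms simp: norm_minus_commute)
  then show ?thesis by simp
qed

lemma lipschitz_gradient_interpolation:
  fixes f :: "'a::real_inner \<Rightarrow> real"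
  assumes "L > 0"
    and "\<And>x. (f has_derivative (\<lambda>h. g x \<bullet> h)) (at x)"
    and "\<And>x y. norm (g x - g y) \<le> L * norm (x - y)"
  shows "f u1 - f u2 \<le> 1 / 2 * ((u1 - u2) \<bullet> (g u1 + g u2))
           - 1 / (4 * L) * (norm (g u1 - g u2))\<^sup>2 + L / 4 * (norm (u1 - u2))\<^sup>2"
proof -
  define a where "a = (1 / 2) *\<^sub>R (u1 - u2)"
  define w where "w = (1 / (2 * L)) *\<^sub>R (g u1 - g u2)"
  define z where "z = u1 - a + w"
  have "f u1 - f z \<le> g u1 \<bullet> (a - w) + L / 2 * (norm (a - w))\<^sup>2"
    using lipschitz_gradient_lower_bound[OF assms(2,3), of u1 z]
    by (simp add: z_def norm_minus_commute inner_diff_right)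
  moreover have "a + a = u1 - u2"
    by (simp add: a_def flip: scaleR_add_left)
  then have "z - u2 = a + w"
    by (simp add: z_def algebra_simps)
  then have "f z - f u2 \<le> g u2 \<bullet> (a + w) + L / 2 * (norm (a + w))\<^sup>2"
    using lipschitz_gradient_upper_bound[OF assms(2,3), of z u2] by simp
  moreover have "g u1 \<bullet> (a - w) + L / 2 * (norm (a - w))\<^sup>2
      + (g u2 \<bullet> (a + w) + L / 2 * (norm (a + w))\<^sup>2)
    = 1 / 2 * ((u1 - u2) \<bullet> (g u1 + g u2))
      - 1 / (4 * L) * (norm (g u1 - g u2))\<^sup>2 + L / 4 * (norm (u1 - u2))\<^sup>2"
    using \<open>L > 0\<close> unfolding power2_norm_eq_inner a_def w_def
    by (simp add: inner_add_left inner_add_right inner_diff_left inner_diff_right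
                  field_simps inner_commute)
  ultimately show ?thesis by linarith
qed

theorem lemma4p4:
  fixes L :: real and f :: "real^'n \<Rightarrow> real" and g :: "real^'n \<Rightarrow> real^'n"
    and u1 u2 :: "real^'n" and H :: "real^'n^'n"
  assumes "L > 0" and "C11 L f g"
  shows "f u1 - f u2
          - 1 / (2 * L) * (((L *\<^sub>R mat 1 - H) *v (u1 - u2)) \<bullet> g u1)
          - 1 / (2 * L) * (((L *\<^sub>R mat 1 + H) *v (u1 - u2)) \<bullet> g u2)
          - 1 / (4 * L) * (norm (H *v (u1 - u2)))\<^sup>2
          - L / 4 * (norm (u1 - u2))\<^sup>2 \<le> 0"
proof -
  define d where "d = u1 - u2"
  define e where "e = g u1 - g u2"
  define p where "p = H *v d"
  have interpolation: "f u1 - f u2 \<le> 1 / 2 * (d \<bullet> (g u1 + g u2))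
           - 1 / (4 * L) * (norm e)\<^sup>2 + L / 4 * (norm d)\<^sup>2"
    using lipschitz_gradient_interpolation[OF \<open>L > 0\<close>] \<open>C11 L f g\<close>
    unfolding C11_def d_def e_def by blast
  have "(L *\<^sub>R mat 1 - H) *v d = L *\<^sub>R d - p" "(L *\<^sub>R mat 1 + H) *v d = L *\<^sub>R d + p"
    by (simp_all add: p_def matrix_vector_mult_diff_rdistrib matrix_vector_mult_add_rdistrib
                      flip: scaleR_matrix_vector_assoc)
  moreover have "1 / (2 * L) * ((L *\<^sub>R d - p) \<bullet> g u1) + 1 / (2 * L) * ((L *\<^sub>R d + p) \<bullet> g u2)
      + 1 / (4 * L) * (norm p)\<^sup>2
    = 1 / 2 * (d \<bullet> (g u1 + g u2)) - 1 / (4 * L) * (norm e)\<^sup>2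
      + 1 / (4 * L) * (norm (p - e))\<^sup>2"
    using \<open>L > 0\<close> unfolding power2_norm_eq_inner e_def
    by (simp add: inner_add_left inner_add_right inner_diff_left inner_diff_right
                  field_simps inner_commute)
  moreover have "0 \<le> 1 / (4 * L) * (norm (p - e))\<^sup>2"
    using \<open>L > 0\<close> by simp
  ultimately have "f u1 - f u2
          - 1 / (2 * L) * (((L *\<^sub>R mat 1 - H) *v d) \<bullet> g u1)
          - 1 / (2 * L) * (((L *\<^sub>R mat 1 + H) *v d) \<bullet> g u2)
          - 1 / (4 * L) * (norm p)\<^sup>2 - L / 4 * (norm d)\<^sup>2 \<le> 0"
    using interpolation by simp
  then show ?thesis
    unfolding d_def p_def .
qed

end
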